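(* Let $1 < p < \infty$ and let $\lambda, \mu, \nu, \alpha, \beta$ be real numbers with $$\lambda = \mu + \nu + 1 + \frac{\beta - \alpha}{p}.$$ Let $$\mathcal{H}_{\lambda,\mu,\nu}(a)(n) = \sum_{m=1}^{\infty} \frac{m^{\mu} n^{\nu}}{(m+n)^{\lambda}} a_m, \quad n \in \mathbb{N}.$$ Then $\mathcal{H}_{\lambda,\mu,\nu}$ is bounded from $l^p_\alpha$ to $l^p_\beta$ if and only if $-p\nu < \beta + 1 < p(\lambda - \nu)$, or equivalently, $p(\mu + 1 - \lambda) < \alpha + 1 < p(\mu + 1)$. Moreover, if $\lambda = \mu + \nu + 1 + \frac{\beta - \alpha}{p}$, $-p\nu < \beta + 1 < p(\lambda - \nu)$, and $$\alpha + 1 \geq p\mu, \qquad \beta + 1 \leq p(1 - \nu)$$ all hold, then $\mathcal{H}_{\lambda,\mu,\nu}$ is bounded from $l^p_\alpha$ to $l^p_\beta$ and $$\|\mathcal{H}_{\lambda,\mu,\nu}\|_{l^p_\alpha \to l^p_\beta} = B\left(\mu + 1 - \frac{1}{p}(\alpha+1),\ \nu + \frac{1}{p}(\beta+1)\right).$$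
   Context: For $\theta\in\mathbb{R}$, $l^p_\theta$ is the space of real sequences $a=\{a_m\}_{m\ge1}$ with $\|a\|_{p,\theta} = \left(\sum_{m=1}^\infty m^\theta |a_m|^p\right)^{1/p} < \infty$. Bounded means: for every $a \in l^p_\alpha$ the defining series converge and $\|\mathcal{H}_{\lambda,\mu,\nu} a\|_{p,\beta} \le C\|a\|_{p,\alpha}$ for a constant $C$. The operator norm is $\|\mathcal{H}_{\lambda,\mu,\nu}\|_{l^p_\alpha \to l^p_\beta} = \sup_{0\ne a \in l^p_\alpha} \|\mathcal{H}_{\lambda,\mu,\nu} a\|_{p,\beta}/\|a\|_{p,\alpha}$. $B(x,y)=\int_0^1 t^{x-1}(1-t)^{y-1}\,dt$ is the Beta function. *)

theory Defs
  imports "HOL-Analysis.Analysis"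
begin

text \<open>Sequences a = (a_m)_{m>=1} are represented as functions nat => real; the value at 0 is ignored.\<close>

definition in_lpw :: "real \<Rightarrow> real \<Rightarrow> (nat \<Rightarrow> real) \<Rightarrow> bool" where
  "in_lpw p \<theta> a \<longleftrightarrow> summable (\<lambda>k. real (Suc k) powr \<theta> * \<bar>a (Suc k)\<bar> powr p)"

definition lpw_norm :: "real \<Rightarrow> real \<Rightarrow> (nat \<Rightarrow> real) \<Rightarrow> real" where
  "lpw_norm p \<theta> a = (\<Sum>k. real (Suc k) powr \<theta> * \<bar>a (Suc k)\<bar> powr p) powr (1 / p)"

definition hilb_term :: "real \<Rightarrow> real \<Rightarrow> real \<Rightarrow> (nat \<Rightarrow> real) \<Rightarrow> nat \<Rightarrow> nat \<Rightarrow> real" where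
  "hilb_term lam mu nu a n k =
     real (Suc k) powr mu * real n powr nu / (real (Suc k) + real n) powr lam * a (Suc k)"

definition hilb_op :: "real \<Rightarrow> real \<Rightarrow> real \<Rightarrow> (nat \<Rightarrow> real) \<Rightarrow> nat \<Rightarrow> real" where
  "hilb_op lam mu nu a n = (\<Sum>k. hilb_term lam mu nu a n k)"

definition hilb_bounded :: "real \<Rightarrow> real \<Rightarrow> real \<Rightarrow> real \<Rightarrow> real \<Rightarrow> real \<Rightarrow> bool" where
  "hilb_bounded p \<alpha> \<beta> lam mu nu \<longleftrightarrow>
     (\<exists>C. \<forall>a. in_lpw p \<alpha> a \<longrightarrow>
        (\<forall>n\<ge>1. summable (hilb_term lam mu nu a n)) \<and>
        in_lpw p \<beta> (hilb_op lam mu nu a) \<and>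
        lpw_norm p \<beta> (hilb_op lam mu nu a) \<le> C * lpw_norm p \<alpha> a)"

definition hilb_opnorm :: "real \<Rightarrow> real \<Rightarrow> real \<Rightarrow> real \<Rightarrow> real \<Rightarrow> real \<Rightarrow> real" where
  "hilb_opnorm p \<alpha> \<beta> lam mu nu =
     Sup {lpw_norm p \<beta> (hilb_op lam mu nu a) / lpw_norm p \<alpha> a | a.
            in_lpw p \<alpha> a \<and> (\<exists>m\<ge>1. a m \<noteq> 0)}"

end

theory Submission
  imports Defs "HOL-Real_Asymp.Real_Asymp"
begin

text \<open>
  Put \<sigma> = \<mu> + 1 - (\<alpha> + 1)/p and \<tau> = \<nu> + (\<beta> + 1)/p, so that \<lambda> = \<sigma> + \<tau>.
  Up to powers of m and n, the kernel m^\<mu> n^\<nu> (m + n)^(-\<lambda>) is x^(\<sigma> - 1) n^\<tau> (x + n)^(-\<lambda>)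
  as a function of x = m, and m^\<sigma> x^(\<tau> - 1) (m + x)^(-\<lambda>) as a function of x = n; the
  substitution u = x/(x + n) turns both into Beta integrands. Comparing sums with integrals
  cell by cell bounds the row sums by B(min \<sigma> 1, \<tau>) and the column sums by B(min \<tau> 1, \<sigma>),
  so Schur's test (Holder's inequality along each row, then summation over the rows) gives
  boundedness for \<sigma>, \<tau> > 0, with norm at most B(\<sigma>, \<tau>) when \<sigma>, \<tau> \<le> 1.
  Conversely, the unit sequence at 1 forces \<sigma> > 0, and the truncations of m^(-(\<alpha> + 1)/p)
  force \<tau> > 0 because the harmonic series diverges. Finally, for a_m = m^(-(\<alpha> + 1 + \<epsilon>)/p)
  the Beta sums are within O(n^(-\<sigma>/2)) of their integrals uniformly in small \<epsilon>, while the
  norm of a blows up as \<epsilon> \<rightarrow> 0; hence the norm ratio tends to B(\<sigma>, \<tau>).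
\<close>

section \<open>Inequalities for series\<close>

lemma term_le_suminf:
  fixes f :: "nat \<Rightarrow> real"
  shows "summable f \<Longrightarrow> (\<And>k. 0 \<le> f k) \<Longrightarrow> f j \<le> suminf f"
  using sum_le_suminf[of f "{j}"] by simp

lemma Youngs_inequality_scaled:
  fixes p \<theta> x :: real
  assumes "p > 1" "\<theta> > 0" "x \<ge> 0"
  shows "x \<le> (\<theta> powr p * x powr p / p + (1 - 1 / p)) / \<theta>"
proof -
  have "x * \<theta> * 1 \<le> (x * \<theta>) powr p / p + 1 powr (p / (p - 1)) / (p / (p - 1))"
    using assms by (intro Youngs_inequality) (auto simp: field_simps)
  then have "x * \<theta> \<le> \<theta> powr p * x powr p / p + (1 - 1 / p)"
    using assms by (simp add: powr_mult field_simps)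
  then show ?thesis
    using assms by (simp add: field_simps)
qed

lemma suminf_mult_le_Young:
  fixes u x :: "nat \<Rightarrow> real" and p \<theta> :: real
  assumes p: "p > 1" and \<theta>: "\<theta> > 0" and u: "\<And>k. u k \<ge> 0" and x: "\<And>k. x k \<ge> 0"
    and summable_u: "summable u" and summable_ux: "summable (\<lambda>k. u k * x k powr p)"
  shows "summable (\<lambda>k. u k * x k)"
    and "(\<Sum>k. u k * x k) \<le> \<theta> powr p / (p * \<theta>) * (\<Sum>k. u k * x k powr p) + (1 - 1 / p) / \<theta> * suminf u"
proof -
  define h where "h k = \<theta> powr p / (p * \<theta>) * (u k * x k powr p) + (1 - 1 / p) / \<theta> * u k" for k
  have ux_le: "u k * x k \<le> h k" for k
  proof -
    have "u k * x k \<le> u k * ((\<theta> powr p * x k powr p / p + (1 - 1 / p)) / \<theta>)"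
      using Youngs_inequality_scaled[OF p \<theta> x[of k]] u[of k] by (rule mult_left_mono)
    also have "\<dots> = h k"
      unfolding h_def using \<theta> p by (simp add: field_simps)
    finally show ?thesis .
  qed
  have h_sums: "h sums (\<theta> powr p / (p * \<theta>) * (\<Sum>k. u k * x k powr p) + (1 - 1 / p) / \<theta> * suminf u)"
    unfolding h_def by (intro sums_add sums_mult summable_sums summable_ux summable_u)
  show summable: "summable (\<lambda>k. u k * x k)"
    using u x ux_le by (intro summable_comparison_test'[OF sums_summable[OF h_sums]]) auto
  show "(\<Sum>k. u k * x k) \<le> \<theta> powr p / (p * \<theta>) * (\<Sum>k. u k * x k powr p) + (1 - 1 / p) / \<theta> * suminf u"
    using ux_le summable h_sums by (intro sums_le[OF _ summable_sums]) auto
qed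

lemma holder_weighted_suminf:
  fixes u x :: "nat \<Rightarrow> real" and p U :: real
  assumes p: "p > 1" and u: "\<And>k. u k \<ge> 0" and x: "\<And>k. x k \<ge> 0"
    and summable_u: "summable u" and U: "suminf u \<le> U"
    and summable_ux: "summable (\<lambda>k. u k * x k powr p)"
  shows "summable (\<lambda>k. u k * x k)"
    and "(\<Sum>k. u k * x k) powr p \<le> U powr (p - 1) * (\<Sum>k. u k * x k powr p)"
proof -
  show summable: "summable (\<lambda>k. u k * x k)"
    using suminf_mult_le_Young(1)[OF p zero_less_one u x summable_u summable_ux] .
  define A where "A = (\<Sum>k. u k * x k powr p)"
  have "A \<ge> 0"
    unfolding A_def using u by (intro suminf_nonneg summable_ux) simp
  have "(\<Sum>k. u k * x k) powr p \<le> U powr (p - 1) * A"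
  proof (cases "A = 0")
    case True
    then have "u k * x k powr p = 0" for k
      using suminf_eq_zero_iff[OF summable_ux] u unfolding A_def by simp
    then have "(\<lambda>k. u k * x k) = (\<lambda>_. 0)"
      using x by (auto simp: powr_eq_0_iff)
    then show ?thesis
      using True p by simp
  next
    case False
    with \<open>A \<ge> 0\<close> have "A > 0"
      by simp
    have "U > 0"
    proof (rule ccontr)
      assume "\<not> U > 0"
      then have "u k = 0" for k
        using U suminf_eq_zero_iff[OF summable_u] suminf_nonneg[OF summable_u] u by (simp add: antisym)
      then show False
        using \<open>A > 0\<close> unfolding A_def by simp
    qed
    define \<theta> where "\<theta> = (U / A) powr (1 / p)"
    have \<theta>: "\<theta> > 0" "\<theta> powr p = U / A"
      unfolding \<theta>_def using \<open>U > 0\<close> \<open>A > 0\<close> p by (simp_all add: powr_powr)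
    have "(\<Sum>k. u k * x k) \<le> \<theta> powr p / (p * \<theta>) * A + (1 - 1 / p) / \<theta> * suminf u"
      unfolding A_def by (rule suminf_mult_le_Young(2)[OF p \<theta>(1) u x summable_u summable_ux])
    also have "\<dots> \<le> U / (p * \<theta>) + (1 - 1 / p) / \<theta> * U"
      using \<theta> \<open>A > 0\<close> p U by (intro add_mono mult_left_mono) (auto simp: field_simps)
    also have "\<dots> = U / \<theta>"
      using p \<theta> by (simp add: field_simps)
    finally have "(\<Sum>k. u k * x k) powr p \<le> (U / \<theta>) powr p"
      using u x p by (intro powr_mono2 suminf_nonneg summable) auto
    also have "\<dots> = U powr (p - 1) * A"
      using \<open>U > 0\<close> \<open>A > 0\<close> \<theta> by (simp add: powr_divide powr_diff field_simps)
    finally show ?thesis .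
  qed
  then show "(\<Sum>k. u k * x k) powr p \<le> U powr (p - 1) * (\<Sum>k. u k * x k powr p)"
    unfolding A_def .
qed

lemma suminf_suminf_le_column_bound:
  fixes w :: "nat \<Rightarrow> nat \<Rightarrow> real" and c :: "nat \<Rightarrow> real"
  assumes w: "\<And>k n. 0 \<le> w k n" and c: "\<And>k. 0 \<le> c k" "summable c"
    and columns: "\<And>k. summable (w k)" "\<And>k. suminf (w k) \<le> K"
    and rows: "\<And>n. summable (\<lambda>k. w k n * c k)"
  shows "summable (\<lambda>n. \<Sum>k. w k n * c k)"
    and "(\<Sum>n. \<Sum>k. w k n * c k) \<le> K * suminf c"
proof -
  have partial: "(\<Sum>n<N. \<Sum>k. w k n * c k) \<le> K * suminf c" for N
  proof -
    have "(\<Sum>n<N. \<Sum>k. w k n * c k) = (\<Sum>k. \<Sum>n<N. w k n * c k)"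
      using rows by (intro suminf_sum[symmetric])
    also have "\<dots> \<le> (\<Sum>k. K * c k)"
    proof (rule suminf_le)
      fix k
      have "(\<Sum>n<N. w k n) \<le> suminf (w k)"
        using columns(1) w by (intro sum_le_suminf) auto
      then have "(\<Sum>n<N. w k n) \<le> K"
        using columns(2)[of k] by linarith
      then show "(\<Sum>n<N. w k n * c k) \<le> K * c k"
        using c by (simp add: mult_right_mono flip: sum_distrib_right)
    qed (use rows c in \<open>auto intro: summable_sum summable_mult\<close>)
    also have "\<dots> = K * suminf c"
      by (rule suminf_mult[OF c(2)])
    finally show ?thesis .
  qed
  show summable: "summable (\<lambda>n. \<Sum>k. w k n * c k)"
    by (rule bounded_imp_summable[where B = "K * suminf c"])
      (use partial w c rows in \<open>auto intro: suminf_nonneg simp del: sum.lessThan_Suc simp flip: lessThan_Suc_atMost\<close>)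
  show "(\<Sum>n. \<Sum>k. w k n * c k) \<le> K * suminf c"
    by (rule suminf_le_const[OF summable partial])
qed

lemma powr_one_plus_ge:
  fixes x L :: real
  assumes "x \<ge> 1"
  shows "min 1 (2 powr L) * x powr L \<le> (1 + x) powr L"
proof (cases "L \<ge> 0")
  case True
  have "min 1 (2 powr L) * x powr L \<le> x powr L"
    by (simp add: mult_left_le_one_le)
  also have "\<dots> \<le> (1 + x) powr L"
    using assms True by (intro powr_mono2) auto
  finally show ?thesis .
next
  case False
  have "min 1 (2 powr L) * x powr L \<le> 2 powr L * x powr L"
    by (intro mult_right_mono) auto
  also have "\<dots> = (2 * x) powr L"
    using assms by (simp add: powr_mult)
  also have "\<dots> \<le> (1 + x) powr L"
    using assms False by (intro powr_mono2') auto
  finally show ?thesis .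
qed

lemma summable_powr_mult_powr_imp_less:
  fixes e L :: real
  assumes "summable (\<lambda>k. real (Suc k) powr e * (1 + real (Suc k)) powr L)"
  shows "e + L < -1"
proof -
  define c where "c = min 1 (2 powr L)"
  have "c > 0"
    unfolding c_def by simp
  have "c * real (Suc k) powr (e + L) \<le> real (Suc k) powr e * (1 + real (Suc k)) powr L" for k
    using mult_left_mono[OF powr_one_plus_ge[of "real (Suc k)" L], of "real (Suc k) powr e"]
    unfolding c_def by (simp add: powr_add mult_ac)
  then have "summable (\<lambda>k. c * real (Suc k) powr (e + L))"
    using \<open>c > 0\<close> by (intro summable_comparison_test'[OF assms]) auto
  then have "summable (\<lambda>k. real (Suc k) powr (e + L))"
    using \<open>c > 0\<close> by (simp add: summable_cmult_iff)
  then have "summable (\<lambda>k. real k powr (e + L))"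
    by (subst summable_Suc_iff[symmetric]) simp
  then show ?thesis
    using summable_real_powr_iff by blast
qed

lemma summable_Suc_powr: "e < -1 \<Longrightarrow> summable (\<lambda>k. real (Suc k) powr e)"
  using summable_Suc_iff[of "\<lambda>k. real k powr e"] summable_real_powr_iff[of e] by simp

section \<open>Sums of the Beta kernel\<close>

lemma Beta_pos: "0 < a \<Longrightarrow> 0 < b \<Longrightarrow> 0 < Beta a (b::real)"
  by (simp add: Beta_def Gamma_real_pos)

lemma Beta_1_left:
  assumes "t > 0" shows "Beta 1 (t::real) = 1 / t"
proof -
  have "Gamma (t + 1) = t * Gamma t"
    using assms by (intro Gamma_plus1) (auto simp: nonpos_Ints_def)
  moreover have "Gamma t \<noteq> 0"
    using Gamma_real_pos[OF assms] by simp
  ultimately show ?thesis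
    using assms unfolding Beta_def by (simp add: add.commute field_simps)
qed

lemma tendsto_Beta_shift:
  fixes a b c :: real
  assumes "a > 0" "b > 0"
  shows "((\<lambda>\<epsilon>. Beta (a - \<epsilon> / c) (b + \<epsilon> / c)) \<longlongrightarrow> Beta a b) (at_right 0)"
proof -
  have "isCont (\<lambda>e. Gamma (a - e)) 0" "isCont (\<lambda>e. Gamma (b + e)) 0"
    using assms by (auto intro!: continuous_intros isCont_o2[OF _ isCont_Gamma] dest: nonpos_Ints_nonpos)
  moreover have "Gamma (a + b) > 0"
    using assms by (intro Gamma_real_pos) simp
  ultimately have "isCont (\<lambda>e. Beta (a - e) (b + e)) 0"
    unfolding Beta_def by (auto intro!: continuous_intros)
  from isCont_tendsto_compose[OF this, of "\<lambda>\<epsilon>. \<epsilon> / c"] show ?thesis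
    by (simp add: tendsto_divide_zero)
qed

text \<open>For every y > 0, the integral of beta_kernel a b y over (0, \<infinity>) is Beta a b.\<close>

definition beta_kernel :: "real \<Rightarrow> real \<Rightarrow> real \<Rightarrow> real \<Rightarrow> real" where
  "beta_kernel a b y x = x powr (a - 1) * y powr b * (x + y) powr (-(a + b))"

definition beta_integrand :: "real \<Rightarrow> real \<Rightarrow> real \<Rightarrow> real" where
  "beta_integrand a b u = u powr (a - 1) * (1 - u) powr (b - 1)"

definition incomplete_beta :: "real \<Rightarrow> real \<Rightarrow> real \<Rightarrow> real" where
  "incomplete_beta a b x = integral {0..x} (beta_integrand a b)"

lemma beta_kernel_nonneg: "0 \<le> beta_kernel a b y x"
  unfolding beta_kernel_def by simp

lemma beta_kernel_commute:
  "0 < x \<Longrightarrow> 0 < y \<Longrightarrow> beta_kernel a b y x * x = beta_kernel b a x y * y"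
  unfolding beta_kernel_def by (simp add: powr_diff add.commute add.left_commute)

lemma beta_kernel_substitution:
  assumes "y > 0" "0 < u" "u < 1"
  shows "beta_kernel a b y (y * u / (1 - u)) * (y / (1 - u)^2) = beta_integrand a b u"
proof -
  define v where "v = 1 - u"
  have v: "v > 0" using assms v_def by simp
  have sum: "y * u / (1 - u) + y = y / v" using assms by (simp add: field_simps v_def)
  have "beta_kernel a b y (y * u / (1 - u)) * (y / (1 - u)^2)
     = (y powr (a - 1) * u powr (a - 1) / v powr (a - 1)) * y powr b
       * (y powr (-(a + b)) / v powr (-(a + b))) * (y powr 1 / v powr 2)"
    unfolding beta_kernel_def sum using assms v
    by (simp add: powr_divide powr_mult v_def powr_realpow)
  also have "\<dots> = (y powr (a - 1) * y powr b * y powr (-(a + b)) * y powr 1) * u powr (a - 1)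
       / (v powr (a - 1) * v powr (-(a + b)) * v powr 2)"
    by (simp add: field_simps)
  also have "y powr (a - 1) * y powr b * y powr (-(a + b)) * y powr 1 = 1"
    using assms by (simp flip: powr_add)
  also have "v powr (a - 1) * v powr (-(a + b)) * v powr 2 = v powr (1 - b)"
    by (simp flip: powr_add)
  also have "1 * u powr (a - 1) / v powr (1 - b) = beta_integrand a b u"
    using v by (simp add: beta_integrand_def v_def powr_diff)
  finally show ?thesis .
qed

lemma beta_kernel_antimono:
  assumes "a \<le> 1" "0 \<le> a + b" "y \<ge> 0" "0 < x" "x \<le> x'"
  shows "beta_kernel a b y x' \<le> beta_kernel a b y x"
proof -
  have "x' powr (a - 1) \<le> x powr (a - 1)" "(x' + y) powr (-(a + b)) \<le> (x + y) powr (-(a + b))"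
    using assms by (auto intro: powr_mono2')
  then show ?thesis
    unfolding beta_kernel_def by (intro mult_mono mult_right_mono) auto
qed

context
  fixes a b :: real
  assumes a_pos: "a > 0" and b_pos: "b > 0"
begin

lemma has_integral_beta_integrand: "(beta_integrand a b has_integral Beta a b) {0..1}"
  unfolding beta_integrand_def[abs_def] using has_integral_Beta_real[OF a_pos b_pos] .

lemma beta_integrand_integrable_on: "0 \<le> x \<Longrightarrow> x' \<le> 1 \<Longrightarrow> beta_integrand a b integrable_on {x..x'}"
  using has_integral_beta_integrand integrable_subinterval_real[of "beta_integrand a b" 0 1 x x']
  by (metis atLeastatMost_subset_iff has_integral_integrable integrable_on_empty linorder_not_le
      atLeastatMost_empty' order.refl)

lemma incomplete_beta_diff:
  "0 \<le> x \<Longrightarrow> x \<le> x' \<Longrightarrow> x' \<le> 1 \<Longrightarrow>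
     integral {x..x'} (beta_integrand a b) = incomplete_beta a b x' - incomplete_beta a b x"
  using Henstock_Kurzweil_Integration.integral_combine[of 0 x x' "beta_integrand a b"] beta_integrand_integrable_on[of 0 x']
  unfolding incomplete_beta_def by simp

lemma incomplete_beta_1: "incomplete_beta a b 1 = Beta a b"
  using has_integral_beta_integrand unfolding incomplete_beta_def by (simp add: integral_unique)

lemma incomplete_beta_mono:
  "0 \<le> x \<Longrightarrow> x \<le> x' \<Longrightarrow> x' \<le> 1 \<Longrightarrow> incomplete_beta a b x \<le> incomplete_beta a b x'"
  using incomplete_beta_diff[of x x'] integral_nonneg[of "beta_integrand a b" "{x..x'}"]
    beta_integrand_integrable_on[of x x']
  by (simp add: beta_integrand_def)

lemma continuous_on_incomplete_beta: "continuous_on {0..1} (incomplete_beta a b)"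
  unfolding incomplete_beta_def[abs_def]
  by (rule indefinite_integral_continuous_1) (rule beta_integrand_integrable_on, auto)

lemma incomplete_beta_le_powr:
  assumes "0 < x" "x \<le> 1/2"
  shows "incomplete_beta a b x \<le> 2 * x powr a / a"
proof -
  have powr_int: "((\<lambda>u. 2 * u powr (a - 1)) has_integral 2 * x powr a / a) {0..x}"
    using has_integral_mult_right[OF has_integral_powr_from_0[of "a - 1" x], of 2] a_pos assms
    by simp
  have beta_int: "(beta_integrand a b has_integral incomplete_beta a b x) {0..x}"
    unfolding incomplete_beta_def using assms
    by (intro integrable_integral beta_integrand_integrable_on) auto
  show ?thesis
  proof (rule has_integral_le[OF beta_int powr_int])
    fix u assume u: "u \<in> {0..x}"
    have "(1 - u) powr (b - 1) \<le> 2"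
    proof (cases "b \<ge> 1")
      case True
      then show ?thesis using u assms powr_le1[of "b - 1" "1 - u"] by auto
    next
      case False
      have "(1 - u) powr (b - 1) \<le> (1/2) powr (b - 1)"
        using u assms False by (intro powr_mono2') auto
      also have "\<dots> = 2 powr (1 - b)"
        by (simp add: powr_divide powr_minus_divide[symmetric] powr_minus)
      also have "\<dots> \<le> 2 powr 1" using b_pos by (intro powr_mono) auto
      finally show ?thesis by simp
    qed
    then show "beta_integrand a b u \<le> 2 * u powr (a - 1)" unfolding beta_integrand_def
      by (metis mult.commute mult_left_mono powr_ge_zero)
  qed
qed

end

context
  fixes a b y :: real
  assumes a_pos: "a > 0" and b_pos: "b > 0" and y_pos: "y > 0"
begin

text \<open>
  The substitution u = x/(x + y) carries the kernel on a cell [x, x'] to the Beta integrand,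
  and the Jacobian y/(1 - u)^2 integrates to x' - x; comparing the integrands pointwise
  therefore needs no change-of-variables theorem.
\<close>

lemma incomplete_beta_increment_bounds:
  assumes "0 \<le> x" "x < x'"
  defines "I \<equiv> incomplete_beta a b (x' / (x' + y)) - incomplete_beta a b (x / (x + y))"
  shows "(\<And>z. x < z \<Longrightarrow> z < x' \<Longrightarrow> c \<le> beta_kernel a b y z) \<Longrightarrow> c * (x' - x) \<le> I"
    and "(\<And>z. x < z \<Longrightarrow> z < x' \<Longrightarrow> beta_kernel a b y z \<le> c) \<Longrightarrow> I \<le> c * (x' - x)"
proof -
  define u u' where "u = x / (x + y)" and "u' = x' / (x' + y)"
  have u: "0 \<le> u" "u \<le> u'" "u' < 1"
    using assms y_pos by (auto simp: u_def u'_def field_simps)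
  have inverse: "y * (z / (z + y)) / (1 - z / (z + y)) = z" if "0 \<le> z" for z
  proof -
    have "1 - z / (z + y) = y / (z + y)"
      using that y_pos by (simp add: field_simps)
    then show ?thesis using that y_pos by simp
  qed
  have inverse_u: "y * u / (1 - u) = x" "y * u' / (1 - u') = x'"
    using assms inverse unfolding u_def u'_def by auto
  have "((\<lambda>v. y / (1 - v)^2) has_integral (y * u' / (1 - u') - y * u / (1 - u))) {u..u'}"
    using u by (intro fundamental_theorem_of_calculus)
      (auto simp: has_real_derivative_iff_has_vector_derivative[symmetric] field_simps
        power2_eq_square intro!: derivative_eq_intros)
  then have jacobian: "((\<lambda>v. c * (y / (1 - v)^2)) has_integral c * (x' - x)) {u<..<u'}"
    unfolding inverse_u has_integral_Icc_iff_Ioo[symmetric] by (rule has_integral_mult_right)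
  have "(beta_integrand a b has_integral I) {u..u'}"
    unfolding I_def u_def[symmetric] u'_def[symmetric] incomplete_beta_diff[OF a_pos b_pos u(1,2) less_imp_le[OF u(3)], symmetric]
    using u a_pos b_pos by (intro integrable_integral beta_integrand_integrable_on) auto
  then have substituted:
    "((\<lambda>v. beta_kernel a b y (y * v / (1 - v)) * (y / (1 - v)^2)) has_integral I) {u<..<u'}"
    unfolding has_integral_Icc_iff_Ioo
    by (subst has_integral_cong[where g = "beta_integrand a b"])
       (use u y_pos beta_kernel_substitution in auto)
  have between: "x < y * v / (1 - v)" "y * v / (1 - v) < x'" if "v \<in> {u<..<u'}" for v
  proof -
    have "u < v" "v < u'" "1 - v > 0" using that u by auto
    then show "x < y * v / (1 - v)" "y * v / (1 - v) < x'"
      using assms y_pos by (auto simp: u_def u'_def field_simps)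
  qed
  have jacobian_pos: "0 \<le> y / (1 - v)^2" for v
    using y_pos by simp
  show "c * (x' - x) \<le> I" if "\<And>z. x < z \<Longrightarrow> z < x' \<Longrightarrow> c \<le> beta_kernel a b y z"
    using that between jacobian_pos
    by (intro has_integral_le[OF jacobian substituted] mult_right_mono) auto
  show "I \<le> c * (x' - x)" if "\<And>z. x < z \<Longrightarrow> z < x' \<Longrightarrow> beta_kernel a b y z \<le> c"
    using that between jacobian_pos
    by (intro has_integral_le[OF substituted jacobian] mult_right_mono) auto
qed

lemma beta_kernel_partial_sum_le:
  assumes "a \<le> 1"
  shows "(\<Sum>k<M. beta_kernel a b y (Suc k)) \<le> incomplete_beta a b (M / (M + y))"
proof -
  define G where "G k = incomplete_beta a b (real k / (real k + y))" for k
  have "beta_kernel a b y (Suc k) \<le> G (Suc k) - G k" for k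
  proof -
    have "beta_kernel a b y (Suc k) \<le> beta_kernel a b y z" if "real k < z" "z < Suc k" for z
      using that assms a_pos b_pos y_pos by (intro beta_kernel_antimono) auto
    from incomplete_beta_increment_bounds(1)[of k "Suc k", OF _ _ this] show ?thesis
      by (simp add: G_def)
  qed
  then have "(\<Sum>k<M. beta_kernel a b y (Suc k)) \<le> (\<Sum>k<M. G (Suc k) - G k)"
    by (rule sum_mono)
  also have "\<dots> = G M - G 0"
    by (rule sum_lessThan_telescope)
  finally show ?thesis
    by (simp add: G_def incomplete_beta_def)
qed

lemma beta_kernel_partial_sum_ge:
  assumes "a \<le> 1"
  shows "incomplete_beta a b (Suc M / (Suc M + y)) - incomplete_beta a b (1 / (1 + y))
           \<le> (\<Sum>k<M. beta_kernel a b y (Suc k))"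
proof -
  define G where "G k = incomplete_beta a b (real (Suc k) / (real (Suc k) + y))" for k
  have "G (Suc k) - G k \<le> beta_kernel a b y (Suc k)" for k
  proof -
    have "beta_kernel a b y z \<le> beta_kernel a b y (Suc k)" if "real (Suc k) < z" "z < Suc (Suc k)" for z
      using that assms a_pos b_pos y_pos by (intro beta_kernel_antimono) auto
    from incomplete_beta_increment_bounds(2)[of "Suc k" "Suc (Suc k)", OF _ _ this] show ?thesis
      by (simp add: G_def)
  qed
  then have "(\<Sum>k<M. G (Suc k) - G k) \<le> (\<Sum>k<M. beta_kernel a b y (Suc k))"
    by (rule sum_mono)
  moreover have "(\<Sum>k<M. G (Suc k) - G k) = G M - G 0"
    by (rule sum_lessThan_telescope)
  ultimately show ?thesis
    by (simp add: G_def add.commute)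
qed

lemma beta_kernel_sum_le:
  assumes "a \<le> 1"
  shows "summable (\<lambda>k. beta_kernel a b y (Suc k))"
    and "(\<Sum>k. beta_kernel a b y (Suc k)) \<le> Beta a b"
proof -
  have partial: "(\<Sum>k<M. beta_kernel a b y (Suc k)) \<le> Beta a b" for M
  proof -
    have "incomplete_beta a b (M / (M + y)) \<le> incomplete_beta a b 1"
      using y_pos by (intro incomplete_beta_mono[OF a_pos b_pos]) auto
    then show ?thesis
      using beta_kernel_partial_sum_le[OF assms, of M] incomplete_beta_1[OF a_pos b_pos] by simp
  qed
  show summable: "summable (\<lambda>k. beta_kernel a b y (Suc k))"
    by (rule bounded_imp_summable[where B = "Beta a b"])
      (use partial beta_kernel_nonneg in \<open>auto simp del: sum.lessThan_Suc simp flip: lessThan_Suc_atMost\<close>)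
  show "(\<Sum>k. beta_kernel a b y (Suc k)) \<le> Beta a b"
    by (rule suminf_le_const[OF summable partial])
qed

lemma beta_kernel_sum_ge:
  assumes "a \<le> 1" "y \<ge> 1"
  shows "Beta a b - 2 * y powr (-a) / a \<le> (\<Sum>k. beta_kernel a b y (Suc k))"
proof -
  have "(\<lambda>M. real (Suc M) / (real (Suc M) + y)) \<longlonglongrightarrow> 1"
    using y_pos by real_asymp
  then have "(\<lambda>M. incomplete_beta a b (Suc M / (Suc M + y))) \<longlonglongrightarrow> Beta a b"
    unfolding incomplete_beta_1[OF a_pos b_pos, symmetric]
    by (rule continuous_on_tendsto_compose[OF continuous_on_incomplete_beta[OF a_pos b_pos]])
      (use y_pos in auto)
  then have "Beta a b - incomplete_beta a b (1 / (1 + y)) \<le> (\<Sum>k. beta_kernel a b y (Suc k))"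
    by (rule LIMSEQ_le[OF tendsto_diff[OF _ tendsto_const] summable_LIMSEQ[OF beta_kernel_sum_le(1)[OF assms(1)]]])
      (use beta_kernel_partial_sum_ge[OF assms(1)] in auto)
  moreover have "incomplete_beta a b (1 / (1 + y)) \<le> 2 * (1 / (1 + y)) powr a / a"
    using assms by (intro incomplete_beta_le_powr[OF a_pos b_pos]) (auto simp: field_simps)
  moreover have "2 * (1 / (1 + y)) powr a / a \<le> 2 * y powr (-a) / a"
  proof -
    have "(1 / (1 + y)) powr a \<le> (1 / y) powr a"
      using assms a_pos by (intro powr_mono2) (auto simp: field_simps)
    also have "(1 / y) powr a = y powr (-a)"
      using y_pos by (simp add: powr_divide powr_minus_divide)
    finally show ?thesis
      using a_pos by (intro divide_right_mono mult_left_mono) auto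
  qed
  ultimately show ?thesis
    by linarith
qed

end

lemma beta_kernel_sum_ge_uniform:
  assumes "0 < c" "c \<le> a" "a \<le> 1" "b > 0" "y \<ge> 1" "2 * y powr (-c) / c \<le> \<eta>"
  shows "Beta a b - \<eta> \<le> (\<Sum>k. beta_kernel a b y (Suc k))"
proof -
  have "2 * y powr (-a) / a \<le> 2 * y powr (-c) / c"
    using assms by (intro frac_le mult_left_mono powr_mono) auto
  moreover have "Beta a b - 2 * y powr (-a) / a \<le> (\<Sum>k. beta_kernel a b y (Suc k))"
    using assms by (intro beta_kernel_sum_ge) auto
  ultimately show ?thesis
    using assms(6) by linarith
qed

lemma beta_kernel_le_beta_kernel_1:
  assumes "1 \<le> a" "0 < x" "0 \<le> y"
  shows "beta_kernel a b y x \<le> beta_kernel 1 b y x"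
proof -
  have "x powr (a - 1) * (x + y) powr (-(a + b)) \<le> (x + y) powr (a - 1) * (x + y) powr (-(a + b))"
    using assms by (intro mult_right_mono powr_mono2) auto
  also have "\<dots> = (x + y) powr (-(1 + b))"
    using assms by (simp flip: powr_add)
  finally show ?thesis
    unfolding beta_kernel_def using assms by (simp add: mult_ac mult_left_mono)
qed

lemma beta_kernel_sum_le_Beta_min:
  assumes "a > 0" "b > 0" "y > 0"
  shows "summable (\<lambda>k. beta_kernel a b y (Suc k))"
    and "(\<Sum>k. beta_kernel a b y (Suc k)) \<le> Beta (min a 1) b"
proof -
  have "summable (\<lambda>k. beta_kernel a b y (Suc k)) \<and> (\<Sum>k. beta_kernel a b y (Suc k)) \<le> Beta (min a 1) b"
  proof (cases "a \<le> 1")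
    case True
    then show ?thesis
      using beta_kernel_sum_le[OF assms True] by simp
  next
    case False
    note summable_1 = beta_kernel_sum_le(1)[OF zero_less_one assms(2,3) order_refl]
      and sum_1 = beta_kernel_sum_le(2)[OF zero_less_one assms(2,3) order_refl]
    have le: "beta_kernel a b y (Suc k) \<le> beta_kernel 1 b y (Suc k)" for k
      using False assms by (intro beta_kernel_le_beta_kernel_1) auto
    have summable: "summable (\<lambda>k. beta_kernel a b y (Suc k))"
      by (rule summable_comparison_test'[OF summable_1]) (simp add: le beta_kernel_nonneg del: of_nat_Suc)
    have "(\<Sum>k. beta_kernel a b y (Suc k)) \<le> (\<Sum>k. beta_kernel 1 b y (Suc k))"
      by (rule suminf_le[OF le summable summable_1])
    then show ?thesis
      using sum_1 False summable by simp
  qed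
  then show "summable (\<lambda>k. beta_kernel a b y (Suc k))"
    and "(\<Sum>k. beta_kernel a b y (Suc k)) \<le> Beta (min a 1) b"
    by auto
qed

lemma beta_kernel_le_Beta_min:
  assumes "a > 0" "b > 0" "y > 0"
  shows "beta_kernel a b y (Suc j) \<le> Beta (min a 1) b"
  using term_le_suminf[OF beta_kernel_sum_le_Beta_min(1)[OF assms] beta_kernel_nonneg, of j]
    beta_kernel_sum_le_Beta_min(2)[OF assms] by linarith

lemma suminf_Suc_powr_ge:
  assumes "\<epsilon> > 0"
  shows "1 / \<epsilon> - 2 \<le> (\<Sum>k. real (Suc k) powr (-1 - \<epsilon>))"
proof -
  have "1 / \<epsilon> - 2 = Beta 1 \<epsilon> - 2 * 1 powr (-1) / 1"
    using Beta_1_left[OF assms] by simp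
  also have "\<dots> \<le> (\<Sum>k. beta_kernel 1 \<epsilon> 1 (Suc k))"
    using assms by (intro beta_kernel_sum_ge) auto
  also have "\<dots> \<le> (\<Sum>k. real (Suc k) powr (-1 - \<epsilon>))"
  proof (rule suminf_le)
    show "beta_kernel 1 \<epsilon> 1 (Suc k) \<le> real (Suc k) powr (-1 - \<epsilon>)" for k
      unfolding beta_kernel_def using assms by (auto intro: powr_mono2')
    show "summable (\<lambda>k. beta_kernel 1 \<epsilon> 1 (Suc k))"
      using assms by (intro beta_kernel_sum_le) auto
    show "summable (\<lambda>k. real (Suc k) powr (-1 - \<epsilon>))"
      using assms by (intro summable_Suc_powr) auto
  qed
  finally show ?thesis .
qed

lemma filterlim_suminf_Suc_powr_at_top:
  "filterlim (\<lambda>\<epsilon>. \<Sum>k. real (Suc k) powr (-1 - \<epsilon>)) at_top (at_right 0)"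
proof (rule filterlim_at_top_mono)
  show "filterlim (\<lambda>\<epsilon> :: real. 1 / \<epsilon> - 2) at_top (at_right 0)"
    by real_asymp
  show "eventually (\<lambda>\<epsilon>. 1 / \<epsilon> - 2 \<le> (\<Sum>k. real (Suc k) powr (-1 - \<epsilon>))) (at_right 0)"
    using eventually_at_right_less by (rule eventually_mono) (rule suminf_Suc_powr_ge)
qed

definition lpw_term :: "real \<Rightarrow> real \<Rightarrow> (nat \<Rightarrow> real) \<Rightarrow> nat \<Rightarrow> real" where
  "lpw_term p \<theta> a k = real (Suc k) powr \<theta> * \<bar>a (Suc k)\<bar> powr p"

lemma lpw_term_nonneg: "0 \<le> lpw_term p \<theta> a k"
  by (simp add: lpw_term_def)

lemma in_lpw_iff_summable: "in_lpw p \<theta> a \<longleftrightarrow> summable (lpw_term p \<theta> a)"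
  by (simp add: in_lpw_def lpw_term_def[abs_def])

lemma lpw_norm_eq: "lpw_norm p \<theta> a = suminf (lpw_term p \<theta> a) powr (1 / p)"
  by (simp add: lpw_norm_def lpw_term_def[abs_def])

lemma lpw_norm_pos:
  assumes "in_lpw p \<theta> a" "m \<ge> 1" "a m \<noteq> 0"
  shows "lpw_norm p \<theta> a > 0"
proof -
  obtain k where k: "m = Suc k"
    using assms(2) not0_implies_Suc by fastforce
  have "0 < real (Suc k) powr \<theta> * \<bar>a (Suc k)\<bar> powr p"
    using assms k by simp
  also have "\<dots> \<le> (\<Sum>k. real (Suc k) powr \<theta> * \<bar>a (Suc k)\<bar> powr p)"
    using assms(1) unfolding in_lpw_def by (intro term_le_suminf) auto
  finally show ?thesis
    unfolding lpw_norm_def by simp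
qed

lemma abs_le_lpw_norm:
  assumes "p > 0" "in_lpw p \<theta> a"
  shows "\<bar>a 1\<bar> \<le> lpw_norm p \<theta> a"
proof -
  have "lpw_term p \<theta> a 0 \<le> suminf (lpw_term p \<theta> a)"
    using assms(2) lpw_term_nonneg unfolding in_lpw_iff_summable by (intro term_le_suminf)
  then have "(\<bar>a 1\<bar> powr p) powr (1 / p) \<le> lpw_norm p \<theta> a"
    unfolding lpw_norm_eq using assms by (intro powr_mono2) (auto simp: lpw_term_def)
  then show ?thesis
    using assms by (simp add: powr_powr)
qed

section \<open>Boundedness\<close>

locale hilbert_exponents =
  fixes p \<alpha> \<beta> lam mu nu :: real
  assumes p_gt_1: "1 < p"
    and lam_eq: "lam = mu + nu + 1 + (\<beta> - \<alpha>) / p"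
begin

definition \<sigma> :: real where "\<sigma> = mu + 1 - (\<alpha> + 1) / p"

definition \<tau> :: real where "\<tau> = nu + (\<beta> + 1) / p"

lemma lam_eq_sum: "lam = \<sigma> + \<tau>"
  unfolding lam_eq \<sigma>_def \<tau>_def by (simp add: diff_divide_distrib add_divide_distrib)

lemma exponent_conditions:
  shows "- p * nu < \<beta> + 1 \<longleftrightarrow> \<tau> > 0"
    and "\<beta> + 1 < p * (lam - nu) \<longleftrightarrow> \<sigma> > 0"
    and "p * (mu + 1 - lam) < \<alpha> + 1 \<longleftrightarrow> \<tau> > 0"
    and "\<alpha> + 1 < p * (mu + 1) \<longleftrightarrow> \<sigma> > 0"
    and "\<alpha> + 1 \<ge> p * mu \<longleftrightarrow> \<sigma> \<le> 1"
    and "\<beta> + 1 \<le> p * (1 - nu) \<longleftrightarrow> \<tau> \<le> 1"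
proof -
  have p: "p > 0"
    using p_gt_1 by simp
  have "p * \<sigma> = p * mu + p - (\<alpha> + 1)" "p * \<tau> = p * nu + (\<beta> + 1)" "p * lam = p * \<sigma> + p * \<tau>"
    unfolding lam_eq_sum \<sigma>_def \<tau>_def using p by (simp_all add: field_simps)
  moreover have "\<sigma> > 0 \<longleftrightarrow> p * \<sigma> > 0" "\<tau> > 0 \<longleftrightarrow> p * \<tau> > 0"
    "\<sigma> \<le> 1 \<longleftrightarrow> p * \<sigma> \<le> p" "\<tau> \<le> 1 \<longleftrightarrow> p * \<tau> \<le> p"
    using p by (simp_all add: zero_less_mult_iff)
  ultimately show "- p * nu < \<beta> + 1 \<longleftrightarrow> \<tau> > 0"
    and "\<beta> + 1 < p * (lam - nu) \<longleftrightarrow> \<sigma> > 0"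
    and "p * (mu + 1 - lam) < \<alpha> + 1 \<longleftrightarrow> \<tau> > 0"
    and "\<alpha> + 1 < p * (mu + 1) \<longleftrightarrow> \<sigma> > 0"
    and "\<alpha> + 1 \<ge> p * mu \<longleftrightarrow> \<sigma> \<le> 1"
    and "\<beta> + 1 \<le> p * (1 - nu) \<longleftrightarrow> \<tau> \<le> 1"
    by (simp_all add: right_diff_distrib distrib_left) linarith+
qed

lemma hilb_kernel_factorization:
  assumes "m > 0" "n > 0"
  shows "m powr mu * n powr nu / (m + n) powr lam * n powr (\<beta> / p)
           = beta_kernel \<sigma> \<tau> n m * ((m / n) powr (1 / p) * m powr (\<alpha> / p))"
  unfolding beta_kernel_def lam_eq_sum \<sigma>_def \<tau>_def using assms p_gt_1
  by (simp add: powr_def exp_add[symmetric] exp_diff[symmetric] ln_div field_simps)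

text \<open>
  Holder's inequality along row n is applied to u_m x_m, where u_m is the row kernel (summing
  to at most B(min \<sigma> 1, \<tau>)); the factor m/n hidden in x_m^p turns u_m into the column kernel.
\<close>

lemma hilb_term_holder_split:
  fixes a :: "nat \<Rightarrow> real" and n k :: nat
  assumes "n > 0"
  defines "x \<equiv> (real (Suc k) / n) powr (1 / p) * (real (Suc k) powr (\<alpha> / p) * \<bar>a (Suc k)\<bar>)"
  shows "\<bar>hilb_term lam mu nu a n k\<bar> = beta_kernel \<sigma> \<tau> n (Suc k) * x / n powr (\<beta> / p)"
    and "beta_kernel \<sigma> \<tau> n (Suc k) * x powr p = beta_kernel \<tau> \<sigma> (Suc k) n * lpw_term p \<alpha> a k"
proof -
  have factor: "real (Suc k) powr mu * n powr nu / (real (Suc k) + n) powr lam * n powr (\<beta> / p)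
                  = beta_kernel \<sigma> \<tau> n (Suc k) * ((real (Suc k) / n) powr (1 / p) * real (Suc k) powr (\<alpha> / p))"
    using hilb_kernel_factorization[of "real (Suc k)" "real n"] assms by simp
  have "\<bar>hilb_term lam mu nu a n k\<bar>
          = real (Suc k) powr mu * n powr nu / (real (Suc k) + n) powr lam * \<bar>a (Suc k)\<bar>"
    by (simp add: hilb_term_def abs_mult)
  then have "\<bar>hilb_term lam mu nu a n k\<bar> * n powr (\<beta> / p)
          = real (Suc k) powr mu * n powr nu / (real (Suc k) + n) powr lam * n powr (\<beta> / p) * \<bar>a (Suc k)\<bar>"
    by (simp only: mult_ac)
  also have "\<dots> = beta_kernel \<sigma> \<tau> n (Suc k) * x"
    unfolding factor x_def by (simp only: mult.assoc)
  finally show "\<bar>hilb_term lam mu nu a n k\<bar> = beta_kernel \<sigma> \<tau> n (Suc k) * x / n powr (\<beta> / p)"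
    using assms by (simp add: eq_divide_eq)
  have "beta_kernel \<sigma> \<tau> n (Suc k) * x powr p = beta_kernel \<sigma> \<tau> n (Suc k) * Suc k / n * lpw_term p \<alpha> a k"
    unfolding x_def lpw_term_def using p_gt_1 assms by (simp add: powr_mult powr_powr)
  also have "\<dots> = beta_kernel \<tau> \<sigma> (Suc k) n * lpw_term p \<alpha> a k"
    using beta_kernel_commute[of "Suc k" n \<sigma> \<tau>] assms by simp
  finally show "beta_kernel \<sigma> \<tau> n (Suc k) * x powr p = beta_kernel \<tau> \<sigma> (Suc k) n * lpw_term p \<alpha> a k" .
qed

lemma hilb_row_estimate:
  assumes "\<sigma> > 0" "\<tau> > 0" "in_lpw p \<alpha> a" "n \<ge> 1"
  defines "w k \<equiv> beta_kernel \<tau> \<sigma> (Suc k) n"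
  shows "summable (hilb_term lam mu nu a n)"
    and "summable (\<lambda>k. w k * lpw_term p \<alpha> a k)"
    and "lpw_term p \<beta> (hilb_op lam mu nu a) (n - 1)
           \<le> Beta (min \<sigma> 1) \<tau> powr (p - 1) * (\<Sum>k. w k * lpw_term p \<alpha> a k)"
proof -
  have p: "p > 1" and n: "real n > 0"
    using p_gt_1 assms by auto
  define u where "u k = beta_kernel \<sigma> \<tau> n (Suc k)" for k
  define x where "x k = (real (Suc k) / n) powr (1 / p) * (real (Suc k) powr (\<alpha> / p) * \<bar>a (Suc k)\<bar>)" for k
  have u_nonneg: "u k \<ge> 0" and x_nonneg: "x k \<ge> 0" for k
    unfolding u_def x_def by (simp_all add: beta_kernel_nonneg)
  have summable_u: "summable u" and sum_u: "suminf u \<le> Beta (min \<sigma> 1) \<tau>"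
    unfolding u_def using beta_kernel_sum_le_Beta_min[OF assms(1,2) n] by auto
  have abs_term: "\<bar>hilb_term lam mu nu a n k\<bar> = u k * x k / n powr (\<beta> / p)" for k
    unfolding u_def x_def using assms(4) by (intro hilb_term_holder_split(1)) simp
  have ux_powr: "u k * x k powr p = w k * lpw_term p \<alpha> a k" for k
    unfolding u_def x_def w_def using assms(4) by (intro hilb_term_holder_split(2)) simp
  have bound: "norm (w k * lpw_term p \<alpha> a k) \<le> Beta (min \<tau> 1) \<sigma> * lpw_term p \<alpha> a k" for k
  proof -
    have "w k \<le> Beta (min \<tau> 1) \<sigma>"
      unfolding w_def using assms(1,2,4) beta_kernel_le_Beta_min[of \<tau> \<sigma> "Suc k" "n - 1"] by simp
    then have "w k * lpw_term p \<alpha> a k \<le> Beta (min \<tau> 1) \<sigma> * lpw_term p \<alpha> a k"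
      by (rule mult_right_mono[OF _ lpw_term_nonneg])
    then show ?thesis
      by (simp add: w_def beta_kernel_nonneg lpw_term_nonneg)
  qed
  show summable_w: "summable (\<lambda>k. w k * lpw_term p \<alpha> a k)"
    using assms(3) unfolding in_lpw_iff_summable
    by (rule summable_comparison_test'[OF summable_mult]) (rule bound)
  then have "summable (\<lambda>k. u k * x k powr p)"
    by (simp add: ux_powr)
  note holder = holder_weighted_suminf[of p u x, OF p u_nonneg x_nonneg summable_u sum_u this]
  have summable_abs: "summable (\<lambda>k. \<bar>hilb_term lam mu nu a n k\<bar>)"
    unfolding abs_term by (rule summable_divide[OF holder(1)])
  then show "summable (hilb_term lam mu nu a n)"
    by (rule summable_rabs_cancel)
  have "\<bar>hilb_op lam mu nu a n\<bar> \<le> (\<Sum>k. \<bar>hilb_term lam mu nu a n k\<bar>)"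
    unfolding hilb_op_def by (rule summable_rabs[OF summable_abs])
  also have "\<dots> = (\<Sum>k. u k * x k) / n powr (\<beta> / p)"
    unfolding abs_term by (rule suminf_divide[OF holder(1)])
  finally have "n powr \<beta> * \<bar>hilb_op lam mu nu a n\<bar> powr p
                  \<le> n powr \<beta> * ((\<Sum>k. u k * x k) / n powr (\<beta> / p)) powr p"
    using p by (intro mult_left_mono powr_mono2) auto
  also have "\<dots> = (\<Sum>k. u k * x k) powr p"
    using n p by (simp add: powr_divide powr_powr)
  also have "\<dots> \<le> Beta (min \<sigma> 1) \<tau> powr (p - 1) * (\<Sum>k. w k * lpw_term p \<alpha> a k)"
    using holder(2) by (simp add: ux_powr)
  finally show "lpw_term p \<beta> (hilb_op lam mu nu a) (n - 1)
                  \<le> Beta (min \<sigma> 1) \<tau> powr (p - 1) * (\<Sum>k. w k * lpw_term p \<alpha> a k)"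
    using assms(4) by (simp add: lpw_term_def)
qed

lemma hilb_op_lpw_sum_le:
  assumes "\<sigma> > 0" "\<tau> > 0" "in_lpw p \<alpha> a"
  shows "\<forall>n\<ge>1. summable (hilb_term lam mu nu a n)"
    and "in_lpw p \<beta> (hilb_op lam mu nu a)"
    and "suminf (lpw_term p \<beta> (hilb_op lam mu nu a))
           \<le> Beta (min \<sigma> 1) \<tau> powr (p - 1) * Beta (min \<tau> 1) \<sigma> * suminf (lpw_term p \<alpha> a)"
proof -
  define w where "w k n = beta_kernel \<tau> \<sigma> (Suc k) (Suc n)" for k n
  define K1 where "K1 = Beta (min \<sigma> 1) \<tau> powr (p - 1)"
  define S where "S n = (\<Sum>k. w k n * lpw_term p \<alpha> a k)" for n
  have w_nonneg: "0 \<le> w k n" for k n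
    unfolding w_def by (rule beta_kernel_nonneg)
  note row = hilb_row_estimate[OF assms]
  show "\<forall>n\<ge>1. summable (hilb_term lam mu nu a n)"
    using row(1) by blast
  have columns: "summable (w k)" "suminf (w k) \<le> Beta (min \<tau> 1) \<sigma>" for k
    using beta_kernel_sum_le_Beta_min[of \<tau> \<sigma> "Suc k"] assms unfolding w_def by auto
  have rows: "summable (\<lambda>k. w k n * lpw_term p \<alpha> a k)" for n
    using row(2)[of "Suc n"] unfolding w_def by simp
  note double = suminf_suminf_le_column_bound[of w "lpw_term p \<alpha> a",
      OF w_nonneg lpw_term_nonneg
        assms(3)[unfolded in_lpw_iff_summable] columns rows, folded S_def]
  have T_le: "lpw_term p \<beta> (hilb_op lam mu nu a) n \<le> K1 * S n" for n
    using row(3)[of "Suc n"] unfolding w_def S_def K1_def by simp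
  have summable_T: "summable (lpw_term p \<beta> (hilb_op lam mu nu a))"
    using T_le lpw_term_nonneg by (intro summable_comparison_test'[OF summable_mult[OF double(1)]]) auto
  then show "in_lpw p \<beta> (hilb_op lam mu nu a)"
    unfolding in_lpw_iff_summable .
  have "suminf (lpw_term p \<beta> (hilb_op lam mu nu a)) \<le> (\<Sum>n. K1 * S n)"
    by (rule suminf_le[OF T_le summable_T summable_mult[OF double(1)]])
  also have "\<dots> = K1 * suminf S"
    by (rule suminf_mult[OF double(1)])
  also have "\<dots> \<le> K1 * (Beta (min \<tau> 1) \<sigma> * suminf (lpw_term p \<alpha> a))"
    unfolding K1_def by (intro mult_left_mono double(2)) simp
  finally show "suminf (lpw_term p \<beta> (hilb_op lam mu nu a))
      \<le> Beta (min \<sigma> 1) \<tau> powr (p - 1) * Beta (min \<tau> 1) \<sigma> * suminf (lpw_term p \<alpha> a)"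
    unfolding K1_def by (simp add: mult.assoc)
qed

lemma hilb_op_norm_le:
  assumes "\<sigma> > 0" "\<tau> > 0" "in_lpw p \<alpha> a"
  shows "lpw_norm p \<beta> (hilb_op lam mu nu a)
           \<le> (Beta (min \<sigma> 1) \<tau> powr (p - 1) * Beta (min \<tau> 1) \<sigma>) powr (1 / p) * lpw_norm p \<alpha> a"
proof -
  have "0 \<le> suminf (lpw_term p \<beta> (hilb_op lam mu nu a))"
    using hilb_op_lpw_sum_le(2)[OF assms] lpw_term_nonneg
    unfolding in_lpw_iff_summable by (intro suminf_nonneg)
  moreover have "0 \<le> suminf (lpw_term p \<alpha> a)"
    using assms(3) lpw_term_nonneg unfolding in_lpw_iff_summable by (intro suminf_nonneg)
  ultimately show ?thesis
    using hilb_op_lpw_sum_le(3)[OF assms] p_gt_1 unfolding lpw_norm_eq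
    by (simp add: powr_mono2 flip: powr_mult)
qed

lemma hilb_bounded_if_pos: "\<sigma> > 0 \<Longrightarrow> \<tau> > 0 \<Longrightarrow> hilb_bounded p \<alpha> \<beta> lam mu nu"
  unfolding hilb_bounded_def using hilb_op_lpw_sum_le hilb_op_norm_le by blast

subsection \<open>Necessity\<close>

lemma hilb_bounded_imp_sigma_pos:
  assumes "hilb_bounded p \<alpha> \<beta> lam mu nu"
  shows "\<sigma> > 0"
proof -
  define e :: "nat \<Rightarrow> real" where "e m = (if m = 1 then 1 else 0)" for m
  have "in_lpw p \<alpha> e"
    unfolding in_lpw_def e_def by (rule summable_finite[of "{0}"]) (use p_gt_1 in auto)
  then have "in_lpw p \<beta> (hilb_op lam mu nu e)"
    using assms unfolding hilb_bounded_def by blast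
  moreover have "hilb_op lam mu nu e n = real n powr nu / (1 + real n) powr lam" for n
  proof -
    have "hilb_op lam mu nu e n = (\<Sum>k\<in>{0}. hilb_term lam mu nu e n k)"
      unfolding hilb_op_def by (rule suminf_finite) (auto simp: hilb_term_def e_def)
    then show ?thesis
      by (simp add: hilb_term_def e_def)
  qed
  ultimately have "summable (\<lambda>k. real (Suc k) powr (\<beta> + p * nu) * (1 + real (Suc k)) powr (- (p * lam)))"
    unfolding in_lpw_iff_summable lpw_term_def using p_gt_1
    by (simp add: powr_def exp_add[symmetric] exp_diff[symmetric] ln_div field_simps del: of_nat_Suc)
  then have "\<beta> + p * nu - p * lam < -1"
    using summable_powr_mult_powr_imp_less by fastforce
  moreover have "\<beta> + p * nu - p * lam = - (p * \<sigma>) - 1"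
    unfolding lam_eq_sum \<tau>_def using p_gt_1 by (simp add: field_simps)
  ultimately have "p * \<sigma> > 0"
    by linarith
  then show ?thesis
    using p_gt_1 by (simp add: zero_less_mult_iff)
qed

definition power_seq :: "real \<Rightarrow> nat \<Rightarrow> real" where
  "power_seq \<epsilon> m = real m powr (- (\<alpha> + 1 + \<epsilon>) / p)"

lemma lpw_term_power_seq: "lpw_term p \<alpha> (power_seq \<epsilon>) k = real (Suc k) powr (-1 - \<epsilon>)"
proof -
  have "lpw_term p \<alpha> (power_seq \<epsilon>) k = real (Suc k) powr \<alpha> * real (Suc k) powr (- (\<alpha> + 1 + \<epsilon>))"
    unfolding lpw_term_def power_seq_def using p_gt_1 by (simp add: powr_powr del: of_nat_Suc)
  also have "\<dots> = real (Suc k) powr (-1 - \<epsilon>)"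
    by (simp flip: powr_add)
  finally show ?thesis .
qed

lemma hilb_op_truncated_power_seq_ge:
  assumes "\<tau> \<le> 0"
  shows "min 1 (2 powr (-lam)) * harm N
           \<le> hilb_op lam mu nu (\<lambda>m. if m \<le> N then power_seq 0 m else 0) 1"
proof -
  define c where "c = min 1 (2 powr (-lam))"
  define a where "a m = (if m \<le> N then power_seq 0 m else 0)" for m
  have term_ge: "(if k < N then c / real (Suc k) else 0) \<le> hilb_term lam mu nu a 1 k" for k
  proof (cases "k < N")
    case True
    define x where "x = real (Suc k)"
    have x: "x \<ge> 1"
      unfolding x_def by simp
    have "c / x = c * x powr (-1)"
      using x by (simp add: powr_minus_divide)
    also have "\<dots> \<le> c * x powr (-1 - \<tau>)"
      using x assms by (intro mult_left_mono powr_mono) (auto simp: c_def)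
    also have "\<dots> = x powr (\<sigma> - 1) * (c * x powr (-lam))"
      using x unfolding lam_eq_sum by (simp add: mult_ac flip: powr_add)
    also have "\<dots> \<le> x powr (\<sigma> - 1) * (1 + x) powr (-lam)"
      unfolding c_def using x by (intro mult_left_mono powr_one_plus_ge) auto
    also have "\<dots> = x powr mu * x powr (- (\<alpha> + 1 + 0) / p) * (1 + x) powr (-lam)"
    proof -
      have "\<sigma> - 1 = mu + - (\<alpha> + 1 + 0) / p"
        unfolding \<sigma>_def using p_gt_1 by (simp add: field_simps)
      then show ?thesis
        by (simp flip: powr_add)
    qed
    also have "\<dots> = hilb_term lam mu nu a 1 k"
      using True unfolding hilb_term_def a_def power_seq_def x_def
      by (simp add: powr_minus_divide add.commute)
    finally show ?thesis
      using True x_def by simp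
  qed (simp add: hilb_term_def a_def)
  have "c * harm N = (\<Sum>k. if k < N then c / real (Suc k) else 0)"
    unfolding harm_altdef by (subst suminf_finite[of "{..<N}"]) (auto simp: sum_distrib_left divide_inverse)
  also have "\<dots> \<le> hilb_op lam mu nu a 1"
    unfolding hilb_op_def using term_ge
    by (intro suminf_le summable_finite[of "{..<N}"]) (auto simp: hilb_term_def a_def)
  finally show ?thesis
    unfolding c_def a_def .
qed

lemma hilb_bounded_imp_tau_pos:
  assumes "hilb_bounded p \<alpha> \<beta> lam mu nu"
  shows "\<tau> > 0"
proof (rule ccontr)
  assume "\<not> \<tau> > 0"
  obtain C where C: "\<And>a. in_lpw p \<alpha> a \<Longrightarrow> lpw_norm p \<beta> (hilb_op lam mu nu a) \<le> C * lpw_norm p \<alpha> a"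
    and image: "\<And>a. in_lpw p \<alpha> a \<Longrightarrow> in_lpw p \<beta> (hilb_op lam mu nu a)"
    using assms unfolding hilb_bounded_def by blast
  define c where "c = min 1 (2 powr (-lam))"
  have "c > 0"
    unfolding c_def by simp
  have harm_le: "harm N \<le> (C / c) powr (p / (p - 1))" if "N \<ge> 1" for N
  proof -
    define a where "a m = (if m \<le> N then power_seq 0 m else 0)" for m
    have lpw_a: "lpw_term p \<alpha> a k = (if k < N then inverse (real (Suc k)) else 0)" for k
      using lpw_term_power_seq[of 0 k] by (simp add: a_def lpw_term_def powr_minus)
    have a_in: "in_lpw p \<alpha> a"
      unfolding in_lpw_iff_summable lpw_a by (rule summable_finite[of "{..<N}"]) auto
    have a_norm: "lpw_norm p \<alpha> a = harm N powr (1 / p)"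
      unfolding lpw_norm_eq lpw_a harm_altdef by (subst suminf_finite[of "{..<N}"]) auto
    have "harm N \<ge> (1 :: real)"
      using harm_mono[OF that] by (simp add: harm_def)
    have "c * harm N \<le> \<bar>hilb_op lam mu nu a 1\<bar>"
      using hilb_op_truncated_power_seq_ge[of N] \<open>\<not> \<tau> > 0\<close> unfolding c_def a_def by simp
    also have "\<dots> \<le> lpw_norm p \<beta> (hilb_op lam mu nu a)"
      using p_gt_1 image[OF a_in] by (intro abs_le_lpw_norm) auto
    also have "\<dots> \<le> C * harm N powr (1 / p)"
      using C[OF a_in] unfolding a_norm .
    finally have "harm N powr (1 - 1 / p) \<le> C / c"
      using \<open>c > 0\<close> \<open>harm N \<ge> 1\<close> by (simp add: powr_diff field_simps)
    then have "(harm N powr (1 - 1 / p)) powr (p / (p - 1)) \<le> (C / c) powr (p / (p - 1))"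
      using p_gt_1 by (intro powr_mono2) auto
    then show ?thesis
      using p_gt_1 \<open>harm N \<ge> 1\<close> by (simp add: powr_powr field_simps)
  qed
  have "eventually (\<lambda>N. harm N > (C / c) powr (p / (p - 1))) sequentially"
    using harm_at_top filterlim_at_top_dense by blast
  moreover have "eventually (\<lambda>N. N \<ge> 1) sequentially"
    by (rule eventually_ge_at_top)
  ultimately have "eventually (\<lambda>N. False) sequentially"
    by eventually_elim (use harm_le in \<open>auto simp flip: not_le\<close>)
  then show False
    by simp
qed

subsection \<open>Sharpness of the Beta constant\<close>

lemma hilb_op_power_seq:
  assumes "\<tau> > 0" "0 < \<epsilon>" "\<epsilon> < p * \<sigma>" "n \<ge> 1"
  shows "hilb_op lam mu nu (power_seq \<epsilon>) n
           = real n powr (nu - (\<tau> + \<epsilon> / p)) * (\<Sum>k. beta_kernel (\<sigma> - \<epsilon> / p) (\<tau> + \<epsilon> / p) n (Suc k))"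
proof -
  have n: "real n > 0"
    using assms by simp
  have "\<sigma> - \<epsilon> / p > 0" "\<tau> + \<epsilon> / p > 0"
    using assms p_gt_1 by (simp_all add: field_simps add_pos_pos)
  then have summable: "summable (\<lambda>k. beta_kernel (\<sigma> - \<epsilon> / p) (\<tau> + \<epsilon> / p) n (Suc k))"
    using n by (intro beta_kernel_sum_le_Beta_min(1)) auto
  have "hilb_term lam mu nu (power_seq \<epsilon>) n k
          = real n powr (nu - (\<tau> + \<epsilon> / p)) * beta_kernel (\<sigma> - \<epsilon> / p) (\<tau> + \<epsilon> / p) n (Suc k)" for k
    unfolding hilb_term_def power_seq_def beta_kernel_def lam_eq_sum \<sigma>_def \<tau>_def using n p_gt_1
    by (simp add: powr_def exp_add[symmetric] exp_diff[symmetric] field_simps)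
  then have term_eq: "hilb_term lam mu nu (power_seq \<epsilon>) n
               = (\<lambda>k. real n powr (nu - (\<tau> + \<epsilon> / p)) * beta_kernel (\<sigma> - \<epsilon> / p) (\<tau> + \<epsilon> / p) n (Suc k))"
    by (rule ext)
  show ?thesis
    unfolding hilb_op_def term_eq by (rule suminf_mult[OF summable])
qed

lemma lpw_term_hilb_op_power_seq_ge:
  assumes "\<sigma> \<le> 1" "\<tau> > 0" "0 < \<epsilon>" "\<epsilon> \<le> p * \<sigma> / 2" "n \<ge> 1"
    and "4 * real n powr (- (\<sigma> / 2)) / \<sigma> \<le> \<eta>" "\<eta> \<le> Beta (\<sigma> - \<epsilon> / p) (\<tau> + \<epsilon> / p)"
  shows "(Beta (\<sigma> - \<epsilon> / p) (\<tau> + \<epsilon> / p) - \<eta>) powr p * real n powr (-1 - \<epsilon>)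
           \<le> lpw_term p \<beta> (hilb_op lam mu nu (power_seq \<epsilon>)) (n - 1)"
proof -
  define a' b' where "a' = \<sigma> - \<epsilon> / p" and "b' = \<tau> + \<epsilon> / p"
  have n: "real n \<ge> 1"
    using assms by simp
  have "\<epsilon> / p > 0" "\<epsilon> / p \<le> \<sigma> / 2"
    using assms p_gt_1 by (simp_all add: field_simps)
  then have a': "\<sigma> / 2 \<le> a'" "a' \<le> 1" and b': "b' > 0"
    using assms unfolding a'_def b'_def by auto
  have "p * \<sigma> > 0"
    using assms by linarith
  then have "\<sigma> > 0"
    using p_gt_1 by (simp add: zero_less_mult_iff)
  have "Beta a' b' - \<eta> \<le> (\<Sum>k. beta_kernel a' b' n (Suc k))"
    using a' b' n \<open>\<sigma> > 0\<close> assms(6) by (intro beta_kernel_sum_ge_uniform[of "\<sigma> / 2"]) auto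
  then have "real n powr (nu - b') * (Beta a' b' - \<eta>)
               \<le> real n powr (nu - b') * (\<Sum>k. beta_kernel a' b' n (Suc k))"
    by (rule mult_left_mono) simp
  also have "\<dots> = hilb_op lam mu nu (power_seq \<epsilon>) n"
    using hilb_op_power_seq[of \<epsilon> n] assms \<open>p * \<sigma> > 0\<close> unfolding a'_def b'_def by simp
  finally have "real n powr (nu - b') * (Beta a' b' - \<eta>) \<le> hilb_op lam mu nu (power_seq \<epsilon>) n" .
  then have "real n powr \<beta> * (real n powr (nu - b') * (Beta a' b' - \<eta>)) powr p
               \<le> real n powr \<beta> * \<bar>hilb_op lam mu nu (power_seq \<epsilon>) n\<bar> powr p"
    using assms(7) p_gt_1 unfolding a'_def b'_def by (intro mult_left_mono powr_mono2) auto
  also have "\<dots> = lpw_term p \<beta> (hilb_op lam mu nu (power_seq \<epsilon>)) (n - 1)"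
    using assms(5) by (simp add: lpw_term_def)
  finally have "real n powr \<beta> * (real n powr (nu - b') * (Beta a' b' - \<eta>)) powr p
                  \<le> lpw_term p \<beta> (hilb_op lam mu nu (power_seq \<epsilon>)) (n - 1)" .
  moreover have "real n powr \<beta> * (real n powr (nu - b') * (Beta a' b' - \<eta>)) powr p
                   = (Beta a' b' - \<eta>) powr p * real n powr (-1 - \<epsilon>)"
  proof -
    have "\<beta> + (nu - b') * p = -1 - \<epsilon>"
      unfolding b'_def \<tau>_def using p_gt_1 by (simp add: field_simps)
    then show ?thesis
      using n assms(7) unfolding a'_def b'_def
      by (simp add: powr_mult powr_powr mult_ac flip: powr_add)
  qed
  ultimately show ?thesis
    unfolding a'_def b'_def by simp
qed

lemma power_seq_in_lpw:
  assumes "\<epsilon> > 0"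
  shows "in_lpw p \<alpha> (power_seq \<epsilon>)"
    and "lpw_norm p \<alpha> (power_seq \<epsilon>) = (\<Sum>k. real (Suc k) powr (-1 - \<epsilon>)) powr (1 / p)"
  using summable_Suc_powr[of "-1 - \<epsilon>"] assms
  by (simp_all add: in_lpw_iff_summable lpw_norm_eq lpw_term_power_seq[abs_def])

lemma lpw_sum_hilb_op_power_seq_ge:
  fixes n\<^sub>0 :: nat
  assumes "0 < \<sigma>" "\<sigma> \<le> 1" "\<tau> > 0" "0 < \<epsilon>" "\<epsilon> \<le> p * \<sigma> / 2"
    and "\<And>n. n \<ge> n\<^sub>0 \<Longrightarrow> 4 * real n powr (- (\<sigma> / 2)) / \<sigma> \<le> \<eta>"
    and "\<eta> \<le> Beta (\<sigma> - \<epsilon> / p) (\<tau> + \<epsilon> / p)" "n\<^sub>0 \<ge> 1"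
  shows "(Beta (\<sigma> - \<epsilon> / p) (\<tau> + \<epsilon> / p) - \<eta>) powr p * ((\<Sum>k. real (Suc k) powr (-1 - \<epsilon>)) - n\<^sub>0)
           \<le> suminf (lpw_term p \<beta> (hilb_op lam mu nu (power_seq \<epsilon>)))"
proof -
  define B where "B = Beta (\<sigma> - \<epsilon> / p) (\<tau> + \<epsilon> / p)"
  define T where "T = lpw_term p \<beta> (hilb_op lam mu nu (power_seq \<epsilon>))"
  define g where "g k = (B - \<eta>) powr p * (real (Suc k) powr (-1 - \<epsilon>) - (if k < n\<^sub>0 then 1 else 0))" for k
  have "summable T"
    unfolding T_def in_lpw_iff_summable[symmetric]
    using hilb_op_lpw_sum_le(2)[OF assms(1,3) power_seq_in_lpw(1)[OF assms(4)]] .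
  have "g k \<le> T k" for k
  proof (cases "k < n\<^sub>0")
    case True
    have "real (Suc k) powr (-1 - \<epsilon>) \<le> 1"
      using powr_mono[of "-1 - \<epsilon>" 0 "real (Suc k)"] assms(4) by simp
    then have "g k \<le> 0"
      unfolding g_def using True by (simp add: mult_nonneg_nonpos)
    also have "0 \<le> T k"
      unfolding T_def by (rule lpw_term_nonneg)
    finally show ?thesis .
  next
    case False
    then have "4 * real (Suc k) powr (- (\<sigma> / 2)) / \<sigma> \<le> \<eta>"
      by (intro assms(6)) simp
    then show ?thesis
      using lpw_term_hilb_op_power_seq_ge[of \<epsilon> "Suc k" \<eta>] assms False
      unfolding g_def T_def B_def by simp
  qed
  moreover have "g sums ((B - \<eta>) powr p * ((\<Sum>k. real (Suc k) powr (-1 - \<epsilon>)) - n\<^sub>0))"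
  proof -
    have "(\<lambda>k. if k < n\<^sub>0 then 1 else 0 :: real) sums n\<^sub>0"
      using sums_If_finite_set[of "{..<n\<^sub>0}" "\<lambda>_. 1 :: real"] by simp
    then show ?thesis
      unfolding g_def using summable_Suc_powr[of "-1 - \<epsilon>"] assms(4)
      by (intro sums_mult sums_diff summable_sums) auto
  qed
  ultimately show ?thesis
    using sums_le summable_sums[OF \<open>summable T\<close>] unfolding B_def T_def by blast
qed

lemma power_seq_ratio_ge:
  fixes n\<^sub>0 :: nat
  assumes "0 < \<sigma>" "\<sigma> \<le> 1" "\<tau> > 0" "0 < \<epsilon>" "\<epsilon> \<le> p * \<sigma> / 2"
    and "\<And>n. n \<ge> n\<^sub>0 \<Longrightarrow> 4 * real n powr (- (\<sigma> / 2)) / \<sigma> \<le> \<eta>"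
    and "\<eta> \<le> Beta (\<sigma> - \<epsilon> / p) (\<tau> + \<epsilon> / p)" "n\<^sub>0 \<ge> 1"
  shows "(Beta (\<sigma> - \<epsilon> / p) (\<tau> + \<epsilon> / p) - \<eta>) * (1 - n\<^sub>0 / (\<Sum>k. real (Suc k) powr (-1 - \<epsilon>)))
           \<le> lpw_norm p \<beta> (hilb_op lam mu nu (power_seq \<epsilon>)) / lpw_norm p \<alpha> (power_seq \<epsilon>)"
    (is "(?B - \<eta>) * (1 - n\<^sub>0 / ?Z) \<le> ?ratio")
proof -
  have "?Z > 0"
    using summable_Suc_powr[of "-1 - \<epsilon>"] assms(4) by (intro suminf_pos) auto
  have "0 \<le> ?ratio"
    by (simp add: lpw_norm_def)
  show ?thesis
  proof (cases "?Z \<le> n\<^sub>0")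
    case True
    then have "1 - n\<^sub>0 / ?Z \<le> 0"
      using \<open>?Z > 0\<close> by (simp add: field_simps)
    then show ?thesis
      using mult_nonneg_nonpos[of "?B - \<eta>" "1 - n\<^sub>0 / ?Z"] assms(7) \<open>0 \<le> ?ratio\<close> by linarith
  next
    case False
    define r where "r = 1 - n\<^sub>0 / ?Z"
    have r: "0 < r" "r \<le> 1" "?Z - n\<^sub>0 = ?Z * r"
      using False \<open>?Z > 0\<close> unfolding r_def by (auto simp: field_simps)
    have "((?B - \<eta>) powr p * (?Z * r)) powr (1 / p) \<le> lpw_norm p \<beta> (hilb_op lam mu nu (power_seq \<epsilon>))"
      unfolding lpw_norm_eq using lpw_sum_hilb_op_power_seq_ge[OF assms] r p_gt_1 \<open>?Z > 0\<close>
      by (intro powr_mono2) auto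
    moreover have "((?B - \<eta>) powr p * (?Z * r)) powr (1 / p) = (?B - \<eta>) * r powr (1 / p) * ?Z powr (1 / p)"
      using assms(7) r \<open>?Z > 0\<close> p_gt_1 by (simp add: powr_mult powr_powr)
    ultimately have "(?B - \<eta>) * r powr (1 / p) \<le> ?ratio"
      using \<open>?Z > 0\<close> power_seq_in_lpw(2)[OF assms(4)] by (simp add: field_simps)
    moreover have "r powr 1 \<le> r powr (1 / p)"
      using r p_gt_1 by (intro powr_mono') auto
    then have "(?B - \<eta>) * r \<le> (?B - \<eta>) * r powr (1 / p)"
      using r assms(7) by (intro mult_left_mono) auto
    ultimately show ?thesis
      unfolding r_def by linarith
  qed
qed

lemma Beta_le_of_ratio_bound:
  assumes "0 < \<sigma>" "\<sigma> \<le> 1" "\<tau> > 0"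
    and bound: "\<And>a. in_lpw p \<alpha> a \<Longrightarrow> (\<exists>m\<ge>1. a m \<noteq> 0) \<Longrightarrow>
                  lpw_norm p \<beta> (hilb_op lam mu nu a) / lpw_norm p \<alpha> a \<le> y"
  shows "Beta \<sigma> \<tau> \<le> y"
proof (rule field_le_epsilon)
  fix \<delta> :: real
  assume "\<delta> > 0"
  define B where "B = Beta \<sigma> \<tau>"
  define \<eta> where "\<eta> = min \<delta> (B / 2)"
  have "B > 0"
    unfolding B_def using assms by (intro Beta_pos)
  then have \<eta>: "0 < \<eta>" "\<eta> < B" "\<eta> \<le> \<delta>"
    unfolding \<eta>_def using \<open>\<delta> > 0\<close> by auto
  have "((\<lambda>n. 4 * real n powr (- (\<sigma> / 2)) / \<sigma>) \<longlongrightarrow> 4 * 0 / \<sigma>) sequentially"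
    using assms by (intro tendsto_intros tendsto_neg_powr filterlim_real_sequentially) auto
  then have "eventually (\<lambda>n. 4 * real n powr (- (\<sigma> / 2)) / \<sigma> < \<eta>) sequentially"
    using \<eta> by (intro order_tendstoD(2)) auto
  then obtain n\<^sub>0 where n\<^sub>0: "n\<^sub>0 \<ge> 1" "\<And>n. n \<ge> n\<^sub>0 \<Longrightarrow> 4 * real n powr (- (\<sigma> / 2)) / \<sigma> \<le> \<eta>"
    unfolding eventually_sequentially by (metis less_imp_le max.boundedE max.cobounded2)
  define B' where "B' \<epsilon> = Beta (\<sigma> - \<epsilon> / p) (\<tau> + \<epsilon> / p)" for \<epsilon>
  define Z where "Z \<epsilon> = (\<Sum>k. real (Suc k) powr (-1 - \<epsilon>))" for \<epsilon>
  have B'_lim: "(B' \<longlongrightarrow> B) (at_right 0)"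
    unfolding B'_def B_def using assms by (intro tendsto_Beta_shift)
  have lim: "((\<lambda>\<epsilon>. (B' \<epsilon> - \<eta>) * (1 - n\<^sub>0 / Z \<epsilon>)) \<longlongrightarrow> (B - \<eta>) * (1 - 0)) (at_right 0)"
    unfolding Z_def
    by (intro tendsto_intros B'_lim tendsto_divide_0[OF tendsto_const]
        filterlim_at_top_imp_at_infinity filterlim_suminf_Suc_powr_at_top)
  have "eventually (\<lambda>\<epsilon>. \<eta> < B' \<epsilon>) (at_right 0)"
    using B'_lim \<eta> by (intro order_tendstoD(1)) auto
  moreover have "eventually (\<lambda>\<epsilon>. \<epsilon> < p * \<sigma> / 2) (at_right (0 :: real))"
    using assms p_gt_1 by (intro order_tendstoD(2)[OF tendsto_ident_at]) auto
  moreover note eventually_at_right_less[of "0 :: real"]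
  ultimately have "eventually (\<lambda>\<epsilon>. (B' \<epsilon> - \<eta>) * (1 - n\<^sub>0 / Z \<epsilon>) \<le> y) (at_right 0)"
  proof eventually_elim
    case (elim \<epsilon>)
    have "(B' \<epsilon> - \<eta>) * (1 - n\<^sub>0 / Z \<epsilon>)
            \<le> lpw_norm p \<beta> (hilb_op lam mu nu (power_seq \<epsilon>)) / lpw_norm p \<alpha> (power_seq \<epsilon>)"
      using elim assms n\<^sub>0 unfolding B'_def Z_def by (intro power_seq_ratio_ge) auto
    also have "\<dots> \<le> y"
      using elim by (intro bound power_seq_in_lpw(1) exI[of _ 1]) (auto simp: power_seq_def)
    finally show ?case .
  qed
  then have "(B - \<eta>) * (1 - 0) \<le> y"
    using tendsto_upperbound[OF lim] by simp
  then show "Beta \<sigma> \<tau> \<le> y + \<delta>"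
    using \<eta> unfolding B_def by simp
qed

lemma hilb_opnorm_eq_Beta:
  assumes "0 < \<sigma>" "\<sigma> \<le> 1" "0 < \<tau>" "\<tau> \<le> 1"
  shows "hilb_opnorm p \<alpha> \<beta> lam mu nu = Beta \<sigma> \<tau>"
proof -
  define S where "S = {lpw_norm p \<beta> (hilb_op lam mu nu a) / lpw_norm p \<alpha> a | a.
                          in_lpw p \<alpha> a \<and> (\<exists>m\<ge>1. a m \<noteq> 0)}"
  have "Beta \<sigma> \<tau> > 0"
    using assms by (intro Beta_pos)
  have "Beta \<sigma> \<tau> powr (p - 1) * Beta \<sigma> \<tau> = Beta \<sigma> \<tau> powr p"
    using \<open>Beta \<sigma> \<tau> > 0\<close> by (simp add: powr_diff)
  then have norm_constant: "(Beta (min \<sigma> 1) \<tau> powr (p - 1) * Beta (min \<tau> 1) \<sigma>) powr (1 / p) = Beta \<sigma> \<tau>"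
    using assms \<open>Beta \<sigma> \<tau> > 0\<close> p_gt_1 by (simp add: Beta_commute[of \<tau>] powr_powr)
  have le: "x \<le> Beta \<sigma> \<tau>" if "x \<in> S" for x
  proof -
    obtain a m where a: "in_lpw p \<alpha> a" "m \<ge> 1" "a m \<noteq> 0"
      and x: "x = lpw_norm p \<beta> (hilb_op lam mu nu a) / lpw_norm p \<alpha> a"
      using \<open>x \<in> S\<close> unfolding S_def by blast
    have "lpw_norm p \<beta> (hilb_op lam mu nu a) \<le> Beta \<sigma> \<tau> * lpw_norm p \<alpha> a"
      using hilb_op_norm_le[OF assms(1,3) a(1)] unfolding norm_constant .
    then show ?thesis
      unfolding x using lpw_norm_pos[OF a] by (simp add: divide_le_eq)
  qed
  have "power_seq 1 1 \<noteq> 0"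
    by (simp add: power_seq_def)
  then have "in_lpw p \<alpha> (power_seq 1) \<and> (\<exists>m\<ge>1. power_seq 1 m \<noteq> 0)"
    using power_seq_in_lpw(1)[of 1] by auto
  then have "S \<noteq> {}"
    unfolding S_def by blast
  then have "Sup S = Beta \<sigma> \<tau>"
    using le assms by (intro cSup_eq_non_empty Beta_le_of_ratio_bound) (auto simp: S_def)
  then show ?thesis
    unfolding hilb_opnorm_def S_def .
qed

end

theorem theorem1p10:
  fixes p \<alpha> \<beta> lam mu nu :: real
  assumes "1 < p"
    and "lam = mu + nu + 1 + (\<beta> - \<alpha>) / p"
  shows "(hilb_bounded p \<alpha> \<beta> lam mu nu \<longleftrightarrow> - p * nu < \<beta> + 1 \<and> \<beta> + 1 < p * (lam - nu))
    \<and> (hilb_bounded p \<alpha> \<beta> lam mu nu \<longleftrightarrow> p * (mu + 1 - lam) < \<alpha> + 1 \<and> \<alpha> + 1 < p * (mu + 1))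
    \<and> (- p * nu < \<beta> + 1 \<and> \<beta> + 1 < p * (lam - nu) \<and> \<alpha> + 1 \<ge> p * mu \<and> \<beta> + 1 \<le> p * (1 - nu)
       \<longrightarrow> hilb_bounded p \<alpha> \<beta> lam mu nu \<and>
           hilb_opnorm p \<alpha> \<beta> lam mu nu = Beta (mu + 1 - (\<alpha> + 1) / p) (nu + (\<beta> + 1) / p))"
proof -
  interpret hilbert_exponents p \<alpha> \<beta> lam mu nu
    using assms by unfold_locales
  have bounded_iff: "hilb_bounded p \<alpha> \<beta> lam mu nu \<longleftrightarrow> \<sigma> > 0 \<and> \<tau> > 0"
    using hilb_bounded_if_pos hilb_bounded_imp_sigma_pos hilb_bounded_imp_tau_pos by blast
  show ?thesis
    unfolding \<sigma>_def[symmetric] \<tau>_def[symmetric] exponent_conditions bounded_iff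
    using hilb_opnorm_eq_Beta by auto
qed

end
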